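(* (1) For every character $\varphi$ of $\mathcal H$, $\varphi\star\delta_\bullet$ is an infinitesimal character of $\mathcal H_{CK}$ (i.e. $\beta(xy)=\beta(x)\varepsilon(y)+\varepsilon(x)\beta(y)$) which coincides with $\varphi$ on nonempty trees (its value on the tree $\bullet$ being $\varphi(\bullet)=1$); the map $\varphi\mapsto\varphi\star\delta_\bullet$ is a bijection between characters of $\mathcal H$ and infinitesimal characters $\beta$ of $\mathcal H_{CK}$ with $\beta(\bullet)=1$. (2) For every character $\varphi$ of $\mathcal H$, $\varphi\star\delta$ is a character of $\mathcal H_{CK}$ which coincides with $\varphi$ on nonempty trees; the map $\varphi\mapsto\varphi\star\delta$ is a bijection between characters of $\mathcal H$ and characters $b$ of $\mathcal H_{CK}$ with $b(\bullet)=1$.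
   Context: Let $k$ be a field of characteristic $0$. Rooted trees are finite and non-planar; $\bullet$ denotes the one-vertex tree. (1) $\mathcal H$ is the free commutative $k$-algebra generated by isomorphism classes of rooted trees with at least one edge, with unit identified with $\bullet$; a character of $\mathcal H$ is a unital algebra morphism $\mathcal H\to k$. A subforest of a rooted tree $t$ is either the trivial subforest $\bullet$ or a nonempty set of pairwise vertex-disjoint subtrees each with at least one edge, identified with the product of its components; $t/s$ is the tree obtained by contracting each component of $s$ to a vertex. (2) $\mathcal H_{CK}$ is the Connes–Kreimer Hopf algebra of rooted forests (free commutative algebra on nonempty rooted trees, unit the empty forest $\mathbf 1$, counit $\varepsilon$, coproduct by admissible cuts); characters of $\mathcal H_{CK}$ are unital algebra morphisms to $k$. $\delta_\bullet\in\mathcal H_{CK}^*$ takes value $1$ on the tree $\bullet$ and $0$ on all other forests; $\delta$ is the character of $\mathcal H_{CK}$ with $\delta(\bullet)=1$ and $\delta(t)=0$ for every tree with at least two vertices. (3) $\Phi:\mathcal H_{CK}\to\mathcal H\otimes\mathcal H_{CK}$ is the algebra morphism with $\Phi(\mathbf 1)=\bullet\otimes\mathbf 1$ and $\Phi(t)=\sum_s s\otimes t/s$ over subforests $s$ of $t$ (with $s\in\mathcal H$, $t/s\in\mathcal H_{CK}$) for each nonempty tree $t$. For $\alpha\in\mathcal H^*$ and $b\in\mathcal H_{CK}^*$, $\alpha\star b=(\alpha\otimes b)\circ\Phi$. *)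

theory Defs
  imports "HOL-Library.Multiset"
begin

text \<open>An isomorphism class of finite non-planar rooted trees is a root together
with a finite multiset of (isomorphism classes of) subtrees hanging from it.\<close>
datatype tree = Node "tree multiset"

definition bullet :: tree where "bullet = Node {#}"

fun kids :: "tree \<Rightarrow> tree multiset" where "kids (Node cs) = cs"

text \<open>A subforest of t corresponds bijectively to a subset of the edge set of t
(its components are the connected components of that edge set; the empty edge set
is the trivial subforest).  We enumerate all edge subsets recursively, with
multiplicity.  For a tree t, sf t is the multiset, over all edge subsets E of t,
of triples (rc, os, q): rc = component of E containing the root (possibly the
one-vertex tree), os = the multiset of the other components (each with at least
one edge), q = the tree t with all edges of E contracted.\<close>

definition close_comp :: "tree \<Rightarrow> tree multiset \<Rightarrow> tree multiset" where
  "close_comp rc os = (if rc = bullet then os else add_mset rc os)"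

type_synonym contrib = "tree multiset \<times> tree multiset \<times> tree multiset"

definition cadd :: "contrib \<Rightarrow> contrib \<Rightarrow> contrib" where
  "cadd a b = (fst a + fst b, fst (snd a) + fst (snd b), snd (snd a) + snd (snd b))"

definition cconv :: "contrib multiset \<Rightarrow> contrib multiset \<Rightarrow> contrib multiset" where
  "cconv A B = sum_mset (image_mset (\<lambda>a. image_mset (cadd a) B) A)"

definition combine :: "contrib multiset multiset \<Rightarrow> contrib multiset" where
  "combine Ms = fold_mset cconv {#({#}, {#}, {#})#} Ms"

text \<open>Options for one child c of the root, given sf c: either the edge root--c is
in the edge set (the root component of c is glued under the root, and in the
quotient the root of c/E is merged into the root), or it is not (the root
component of c is closed off, and c/E becomes a child of the root in the quotient).\<close>
definition child_opts :: "(tree \<times> tree multiset \<times> tree) multiset \<Rightarrow> contrib multiset" where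
  "child_opts X =
     image_mset (\<lambda>(rc, os, q). ({#rc#}, os, kids q)) X +
     image_mset (\<lambda>(rc, os, q). ({#}, close_comp rc os, {#q#})) X"

primrec sf :: "tree \<Rightarrow> (tree \<times> tree multiset \<times> tree) multiset" where
  "sf (Node cs) = image_mset (\<lambda>(rk, os, qk). (Node rk, os, Node qk))
                    (combine (image_mset (\<lambda>c. child_opts (sf c)) cs))"

text \<open>The terms s \<otimes> t/s of Phi(t), over all subforests s of t; s is an element of
the monomial basis of H (a multiset of trees with at least one edge, the empty
multiset being the unit = bullet), t/s a tree.\<close>
definition phi_tree :: "tree \<Rightarrow> (tree multiset \<times> tree) multiset" where
  "phi_tree t = image_mset (\<lambda>(rc, os, q). (close_comp rc os, q)) (sf t)"

text \<open>Basis of H: monomials = finite multisets of trees with at least one edge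
(the empty multiset is the unit, identified with bullet).  Basis of H_CK:
forests = finite multisets of trees (the empty multiset is the empty forest 1).
Linear functionals are given by their values on these bases.\<close>

definition H_monomial :: "tree multiset \<Rightarrow> bool" where
  "H_monomial M \<longleftrightarrow> (\<forall>t\<in>#M. t \<noteq> bullet)"

definition tree_H :: "tree \<Rightarrow> tree multiset" where
  "tree_H t = (if t = bullet then {#} else {#t#})"

text \<open>A character of H: unital multiplicative functional.  Functionals on H are
represented as functions on tree multisets vanishing off the monomial basis.\<close>
definition character_H :: "(tree multiset \<Rightarrow> 'k::field) \<Rightarrow> bool" where
  "character_H \<phi> \<longleftrightarrow>
     (\<forall>M. \<not> H_monomial M \<longrightarrow> \<phi> M = 0) \<and>
     \<phi> {#} = 1 \<and>
     (\<forall>M N. H_monomial M \<longrightarrow> H_monomial N \<longrightarrow> \<phi> (M + N) = \<phi> M * \<phi> N)"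

definition eps_CK :: "tree multiset \<Rightarrow> 'k::field" where
  "eps_CK F = (if F = {#} then 1 else 0)"

definition character_CK :: "(tree multiset \<Rightarrow> 'k::field) \<Rightarrow> bool" where
  "character_CK b \<longleftrightarrow> b {#} = 1 \<and> (\<forall>F G. b (F + G) = b F * b G)"

definition infinitesimal_character_CK :: "(tree multiset \<Rightarrow> 'k::field) \<Rightarrow> bool" where
  "infinitesimal_character_CK \<beta> \<longleftrightarrow>
     (\<forall>F G. \<beta> (F + G) = \<beta> F * eps_CK G + eps_CK F * \<beta> G)"

definition delta_bullet :: "tree multiset \<Rightarrow> 'k::field" where
  "delta_bullet F = (if F = {#bullet#} then 1 else 0)"

definition delta_char :: "tree multiset \<Rightarrow> 'k::field" where
  "delta_char F = (if (\<forall>t\<in>#F. t = bullet) then 1 else 0)"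

definition pconv :: "(tree multiset \<times> tree multiset) multiset \<Rightarrow>
    (tree multiset \<times> tree multiset) multiset \<Rightarrow> (tree multiset \<times> tree multiset) multiset" where
  "pconv A B = sum_mset (image_mset (\<lambda>(s1, f1). image_mset (\<lambda>(s2, f2). (s1 + s2, f1 + f2)) B) A)"

text \<open>Phi on a forest (algebra morphism extension; Phi(1) = bullet \<otimes> 1).\<close>
definition Phi :: "tree multiset \<Rightarrow> (tree multiset \<times> tree multiset) multiset" where
  "Phi F = fold_mset pconv {#({#}, {#})#}
             (image_mset (\<lambda>t. image_mset (\<lambda>(s, q). (s, {#q#})) (phi_tree t)) F)"

definition star :: "(tree multiset \<Rightarrow> 'k::field) \<Rightarrow> (tree multiset \<Rightarrow> 'k) \<Rightarrow> tree multiset \<Rightarrow> 'k" where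
  "star \<alpha> b F = sum_mset (image_mset (\<lambda>(s, f). \<alpha> s * b f) (Phi F))"

end

theory Submission
  imports Defs "HOL-Library.Product_Plus"
begin

(* Phi is an algebra morphism, and on a single tree t exactly one term of
   Phi(t) = sum_s s (x) t/s has quotient t/s = bullet, namely s = t (the subforest made of
   all edges of t; only contracting every edge yields the one-vertex tree).  Hence:
   - for any functional b on forests with b(q) = [q = bullet] on trees,
     (phi * b)(t) = phi(t) for every tree t;
   - if b is multiplicative (delta), then so is phi * b, because Phi is multiplicative;
   - Phi maps a forest with n trees to terms whose right factor has n trees, so
     phi * delta_bullet vanishes on the empty forest and on forests with >= 2 trees,
     i.e. it is an infinitesimal character.
   Bijectivity: characters of H, characters of H_CK and infinitesimal characters of H_CK
   are all determined by their values on trees, and any prescription of values on trees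
   with value 1 on bullet extends to a character of H (H is free commutative). *)

section \<open>Convolution of multisets in a commutative monoid\<close>

text \<open>The multiset of all sums a + b with a from A and b from B.  Both products
  cconv and pconv of the definitions are instances, on componentwise-added tuples.\<close>
definition gconv :: "'a::comm_monoid_add multiset \<Rightarrow> 'a multiset \<Rightarrow> 'a multiset" where
  "gconv A B = sum_mset (image_mset (\<lambda>a. image_mset ((+) a) B) A)"

lemma gconv_empty [simp]: "gconv {#} B = {#}"
  by (simp add: gconv_def)

lemma gconv_add_mset [simp]: "gconv (add_mset a A) B = image_mset ((+) a) B + gconv A B"
  by (simp add: gconv_def)

lemma gconv_plus: "gconv (A + C) B = gconv A B + gconv C B"
  by (simp add: gconv_def)

lemma gconv_empty_right [simp]: "gconv A {#} = {#}"
  by (induction A) auto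

lemma gconv_add_mset_right [simp]: "gconv A (add_mset b B) = image_mset (\<lambda>a. a + b) A + gconv A B"
  by (induction A) (auto simp: add.commute)

lemma gconv_commute: "gconv A B = gconv B A"
  by (induction A) (auto simp: add.commute)

lemma gconv_image_plus: "gconv (image_mset ((+) a) B) C = image_mset ((+) a) (gconv B C)"
  by (induction B) (auto simp: multiset.map_comp comp_def add.assoc intro!: image_mset_cong)

lemma gconv_assoc: "gconv (gconv A B) C = gconv A (gconv B C)"
  by (induction A) (simp_all only: gconv_add_mset gconv_plus gconv_image_plus gconv_empty)

lemma image_plus_zero [simp]: "image_mset ((+) 0) (M::'a::comm_monoid_add multiset) = M"
  by (induction M) auto

lemma gconv_comp_fun_commute: "comp_fun_commute gconv"
  by unfold_locales (simp add: fun_eq_iff, metis gconv_assoc gconv_commute)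

lemma fold_gconv_add_mset: "fold_mset gconv z (add_mset x M) = gconv x (fold_mset gconv z M)"
  by (rule comp_fun_commute.fold_mset_add_mset[OF gconv_comp_fun_commute])

lemma fold_gconv_plus:
  "fold_mset gconv {#0#} (M + N) = gconv (fold_mset gconv {#0#} M) (fold_mset gconv {#0#} N)"
  by (induction M) (auto simp: fold_gconv_add_mset gconv_assoc)

lemma gconv_mem: "x \<in># gconv A B \<Longrightarrow> \<exists>a\<in>#A. \<exists>b\<in>#B. x = a + b"
  by (induction A) auto

text \<open>Summing a multiplicative weight over a convolution gives the product of the sums;
  this is what makes the convolution product of two multiplicative functionals multiplicative.\<close>
lemma sum_mset_gconv:
  fixes g :: "'a::comm_monoid_add \<Rightarrow> 'k::comm_semiring_1"
  assumes "\<And>a b. g (a + b) = g a * g b"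
  shows "sum_mset (image_mset g (gconv A B)) = sum_mset (image_mset g A) * sum_mset (image_mset g B)"
proof (induction A)
  case empty
  then show ?case by simp
next
  case (add a A)
  have "sum_mset (image_mset g (image_mset ((+) a) B)) = g a * sum_mset (image_mset g B)"
    by (induction B) (auto simp: assms algebra_simps)
  with add show ?case by (simp add: algebra_simps)
qed

lemma filter_gconv:
  assumes "\<And>a b. P (a + b) \<longleftrightarrow> P a \<and> P b"
  shows "filter_mset P (gconv A B) = gconv (filter_mset P A) (filter_mset P B)"
proof (induction A)
  case empty
  then show ?case by simp
next
  case (add a A)
  have "filter_mset P (image_mset ((+) a) B) = (if P a then image_mset ((+) a) (filter_mset P B) else {#})"
    by (induction B) (auto simp: assms)
  with add show ?case by simp
qed

lemma filter_fold_gconv: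
  assumes "\<And>a b. P (a + b) \<longleftrightarrow> P a \<and> P b" and "P 0"
  shows "filter_mset P (fold_mset gconv {#0#} Ms) = fold_mset gconv {#0#} (image_mset (filter_mset P) Ms)"
  by (induction Ms) (auto simp: fold_gconv_add_mset filter_gconv[OF assms(1)] assms(2))

lemma cadd_eq_plus: "cadd = (+)"
  by (auto simp: fun_eq_iff cadd_def plus_prod_def)

lemma cconv_eq_gconv: "cconv = gconv"
  by (simp add: fun_eq_iff cconv_def gconv_def cadd_eq_plus)

lemma combine_eq_fold_gconv: "combine Ms = fold_mset gconv {#0#} Ms"
  by (simp add: combine_def cconv_eq_gconv zero_prod_def)

lemma pconv_eq_gconv: "pconv = gconv"
proof -
  have inner: "(\<lambda>(s2, f2). (s1 + s2, f1 + f2)) = (+) (s1, f1)" for s1 f1 :: "tree multiset"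
    by (auto simp: fun_eq_iff)
  have outer: "(\<lambda>(s1, f1). image_mset (\<lambda>(s2, f2). (s1 + s2, f1 + f2)) B) =
        (\<lambda>a. image_mset ((+) (a::tree multiset \<times> tree multiset)) B)" for B
    by (auto simp: fun_eq_iff inner)
  show ?thesis
    by (simp add: fun_eq_iff pconv_def gconv_def outer)
qed

definition Phi_tree :: "tree \<Rightarrow> (tree multiset \<times> tree multiset) multiset" where
  "Phi_tree t = image_mset (\<lambda>(s, q). (s, {#q#})) (phi_tree t)"

lemma Phi_eq_fold_gconv: "Phi F = fold_mset gconv {#0#} (image_mset Phi_tree F)"
  by (simp add: Phi_def pconv_eq_gconv zero_prod_def Phi_tree_def[abs_def])

lemma Phi_plus: "Phi (F + G) = gconv (Phi F) (Phi G)"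
  by (simp add: Phi_eq_fold_gconv fold_gconv_plus)

lemma Phi_empty: "Phi {#} = {#({#}, {#})#}"
  by (simp add: Phi_eq_fold_gconv zero_prod_def)

lemma Phi_single: "Phi {#t#} = Phi_tree t"
  by (simp add: Phi_eq_fold_gconv fold_gconv_add_mset)

lemma Phi_size: "x \<in># Phi F \<Longrightarrow> size (snd x) = size F"
proof (induction F arbitrary: x)
  case empty
  then show ?case by (simp add: Phi_empty)
next
  case (add t F)
  have "Phi (add_mset t F) = gconv (Phi_tree t) (Phi F)"
    using Phi_plus[of "{#t#}" F] by (simp add: Phi_single)
  with add.prems obtain a b where "a \<in># Phi_tree t" "b \<in># Phi F" "x = a + b"
    by (auto dest: gconv_mem)
  moreover have "size (snd a) = 1"
    using \<open>a \<in># Phi_tree t\<close> by (auto simp: Phi_tree_def)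
  ultimately show ?case using add.IH by simp
qed

section \<open>Only the full edge set contracts a tree to a point\<close>

lemma kids_eq_empty_iff: "kids q = {#} \<longleftrightarrow> q = bullet"
  by (cases q) (auto simp: bullet_def)

definition no_quotient_kids :: "contrib \<Rightarrow> bool" where
  "no_quotient_kids x \<longleftrightarrow> snd (snd x) = {#}"

lemma no_quotient_kids_plus: "no_quotient_kids (a + b) \<longleftrightarrow> no_quotient_kids a \<and> no_quotient_kids b"
  by (simp add: no_quotient_kids_def)

text \<open>If the only edge subset of c contracting c to a point is the full one, then the only
  option for c as a child with no quotient kids is to glue all of c under the root.\<close>
lemma filter_child_opts:
  assumes "filter_mset (\<lambda>x. snd (snd x) = bullet) X = {#(c, {#}, bullet)#}"
  shows "filter_mset no_quotient_kids (child_opts X) = {#({#c#}, {#}, {#})#}"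
proof -
  have glued: "filter_mset no_quotient_kids (image_mset (\<lambda>(rc, os, q). ({#rc#}, os, kids q)) X)
     = image_mset (\<lambda>(rc, os, q). ({#rc#}, os, kids q)) (filter_mset (\<lambda>x. snd (snd x) = bullet) X)"
    by (simp add: filter_mset_image_mset no_quotient_kids_def split_beta kids_eq_empty_iff)
  have cut: "filter_mset no_quotient_kids (image_mset (\<lambda>(rc, os, q). ({#}, close_comp rc os, {#q#})) X) = {#}"
    by (simp add: filter_mset_image_mset no_quotient_kids_def split_beta)
  show ?thesis using glued cut assms by (simp add: child_opts_def kids_eq_empty_iff)
qed

lemma fold_gconv_singletons:
  "fold_mset gconv {#0#} (image_mset (\<lambda>c. {#({#c#}, {#}, {#}) :: contrib#}) cs) = {#(cs, {#}, {#})#}"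
  by (induction cs) (auto simp: fold_gconv_add_mset zero_prod_def)

text \<open>The edge subsets of t with quotient bullet: exactly one, the full edge set, whose
  root component is t itself and which has no other components.\<close>
lemma sf_quotient_bullet: "filter_mset (\<lambda>x. snd (snd x) = bullet) (sf t) = {#(t, {#}, bullet)#}"
proof (induction t)
  case (Node cs)
  let ?f = "\<lambda>(rk, os, qk). (Node rk, os, Node qk)"
  let ?opts = "image_mset (\<lambda>c. child_opts (sf c)) cs"
  have "(\<lambda>x. snd (snd (?f x)) = bullet) = no_quotient_kids"
    by (auto simp: fun_eq_iff no_quotient_kids_def bullet_def split_beta)
  moreover have "image_mset (filter_mset no_quotient_kids) ?opts
      = image_mset (\<lambda>c. {#({#c#}, {#}, {#}) :: contrib#}) cs"
    using Node by (auto simp: multiset.map_comp comp_def intro!: image_mset_cong filter_child_opts)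
  then have "filter_mset no_quotient_kids (combine ?opts) = {#(cs, {#}, {#})#}"
    by (simp add: combine_eq_fold_gconv no_quotient_kids_plus no_quotient_kids_def
        filter_fold_gconv fold_gconv_singletons)
  ultimately have "filter_mset (\<lambda>x. snd (snd x) = bullet) (image_mset ?f (combine ?opts))
     = image_mset ?f {#(cs, {#}, {#})#}"
    by (simp only: filter_mset_image_mset)
  then show ?case by (simp add: bullet_def)
qed

lemma phi_tree_quotient_bullet:
  "filter_mset (\<lambda>x. snd x = bullet) (phi_tree t) = {#(tree_H t, bullet)#}"
  using sf_quotient_bullet[of t]
  by (simp add: phi_tree_def filter_mset_image_mset split_beta close_comp_def tree_H_def)

lemma star_eq: "star \<phi> b F = sum_mset (image_mset (\<lambda>x. \<phi> (fst x) * b (snd x)) (Phi F))"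
  unfolding star_def case_prod_beta' ..

lemma star_empty: "star \<phi> b {#} = \<phi> {#} * b {#}"
  by (simp add: star_eq Phi_empty)

lemma sum_mset_if_filter:
  "sum_mset (image_mset (\<lambda>x. if P x then g x else 0) M) = sum_mset (image_mset g (filter_mset P M))"
  by (induction M) auto

lemma star_single:
  assumes "\<And>q. b {#q#} = (if q = bullet then 1 else 0)"
  shows "star \<phi> b {#t#} = \<phi> (tree_H t)"
proof -
  have "star \<phi> b {#t#} = sum_mset (image_mset (\<lambda>x. if snd x = bullet then \<phi> (fst x) else 0) (phi_tree t))"
    by (auto simp: star_def Phi_single Phi_tree_def multiset.map_comp comp_def split_beta assms
        intro!: arg_cong[where f=sum_mset] image_mset_cong)
  also have "\<dots> = sum_mset (image_mset (\<lambda>x. \<phi> (fst x)) (filter_mset (\<lambda>x. snd x = bullet) (phi_tree t)))"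
    by (rule sum_mset_if_filter)
  finally show ?thesis by (simp add: phi_tree_quotient_bullet)
qed

lemma H_monomial_plus: "H_monomial (M + N) \<longleftrightarrow> H_monomial M \<and> H_monomial N"
  by (auto simp: H_monomial_def)

text \<open>A character of H is multiplicative on all multisets, not only on monomials,
  since it vanishes off the monomial basis.\<close>
lemma character_H_plus: "character_H \<phi> \<Longrightarrow> \<phi> (M + N) = \<phi> M * \<phi> N"
  unfolding character_H_def by (metis H_monomial_plus mult_zero_left mult_zero_right)

text \<open>Since Phi is an algebra morphism, \<phi> \<star> b is multiplicative whenever b is.\<close>
lemma star_plus:
  assumes "character_H \<phi>" "\<And>F G. b (F + G) = b F * b G"
  shows "star \<phi> b (F + G) = star \<phi> b F * star \<phi> b G"
  unfolding star_eq Phi_plus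
  by (rule sum_mset_gconv) (simp add: character_H_plus[OF assms(1)] assms(2) algebra_simps)

lemma star_delta_char_character:
  assumes "character_H \<phi>"
  shows "character_CK (star \<phi> delta_char)"
proof -
  have mult: "delta_char (F + G) = delta_char F * delta_char G" for F G :: "tree multiset"
    by (auto simp: delta_char_def)
  have "star \<phi> delta_char {#} = 1"
    using assms by (simp add: star_empty delta_char_def character_H_def)
  then show ?thesis
    using star_plus[OF assms mult] by (simp add: character_CK_def)
qed

text \<open>Since Phi preserves the number of trees, \<phi> \<star> delta_bullet vanishes on every
  forest that is not a single tree, which makes it infinitesimal.\<close>
lemma star_delta_bullet_infinitesimal: "infinitesimal_character_CK (star \<phi> delta_bullet)"
  unfolding infinitesimal_character_CK_def
proof (intro allI)
  fix F G :: "tree multiset"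
  have empty: "star \<phi> delta_bullet {#} = 0"
    by (simp add: star_empty delta_bullet_def)
  show "star \<phi> delta_bullet (F + G) = star \<phi> delta_bullet F * eps_CK G + eps_CK F * star \<phi> delta_bullet G"
  proof (cases "F = {#} \<or> G = {#}")
    case True
    then show ?thesis using empty by (auto simp: eps_CK_def)
  next
    case False
    have "\<forall>x\<in>#Phi (F + G). \<phi> (fst x) * delta_bullet (snd x) = 0"
    proof
      fix x assume x: "x \<in># Phi (F + G)"
      have "size (snd x) = size F + size G" using Phi_size[OF x] by simp
      moreover have "0 < size F" "0 < size G" using False by (simp_all add: nonempty_has_size)
      ultimately have "size (snd x) \<noteq> 1" by linarith
      then show "\<phi> (fst x) * delta_bullet (snd x) = 0" by (auto simp: delta_bullet_def)
    qed
    then have "star \<phi> delta_bullet (F + G) = 0"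
      unfolding star_eq by (simp add: sum_mset.neutral)
    then show ?thesis using False by (simp add: eps_CK_def)
  qed
qed

section \<open>Determination by values on trees\<close>

lemma character_H_eqI:
  assumes "character_H \<phi>1" "character_H \<phi>2" "\<forall>t. \<phi>1 (tree_H t) = \<phi>2 (tree_H t)"
  shows "\<phi>1 = \<phi>2"
proof
  fix M show "\<phi>1 M = \<phi>2 M"
  proof (induction M)
    case empty
    then show ?case using assms by (simp add: character_H_def)
  next
    case (add t M)
    show ?case
    proof (cases "t = bullet")
      case True
      then have "\<not> H_monomial (add_mset t M)" by (simp add: H_monomial_def)
      then show ?thesis using assms by (simp add: character_H_def)
    next
      case False
      then have "\<phi>1 {#t#} = \<phi>2 {#t#}" using assms(3)[rule_format, of t] by (simp add: tree_H_def)
      then show ?thesis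
        using add character_H_plus[OF assms(1), of "{#t#}" M] character_H_plus[OF assms(2), of "{#t#}" M]
        by simp
    qed
  qed
qed

text \<open>H is free commutative: any values on trees with value 1 on bullet extend to a character.\<close>
definition character_H_of :: "(tree multiset \<Rightarrow> 'k::field) \<Rightarrow> tree multiset \<Rightarrow> 'k" where
  "character_H_of x M = (if H_monomial M then prod_mset (image_mset (\<lambda>t. x {#t#}) M) else 0)"

lemma character_H_of_character: "character_H (character_H_of x)"
  by (auto simp: character_H_def character_H_of_def H_monomial_plus) (simp add: H_monomial_def)

lemma character_H_of_tree:
  assumes "x {#bullet#} = 1"
  shows "character_H_of x (tree_H t) = x {#t#}"
proof (cases "t = bullet")
  case True
  then show ?thesis using assms by (simp add: character_H_of_def tree_H_def H_monomial_def)
next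
  case False
  then show ?thesis by (simp add: character_H_of_def tree_H_def H_monomial_def)
qed

lemma infinitesimal_character_empty:
  assumes "infinitesimal_character_CK \<beta>"
  shows "\<beta> {#} = 0"
proof -
  have "\<beta> ({#} + {#}) = \<beta> {#} * eps_CK {#} + eps_CK {#} * \<beta> {#}"
    using assms unfolding infinitesimal_character_CK_def by blast
  then have "\<beta> {#} + 0 = \<beta> {#} + \<beta> {#}" by (simp add: eps_CK_def)
  then show ?thesis by (metis add_left_cancel)
qed

lemma infinitesimal_character_eqI:
  fixes x y :: "tree multiset \<Rightarrow> 'k::field"
  assumes "infinitesimal_character_CK x" "infinitesimal_character_CK y" "\<forall>t. x {#t#} = y {#t#}"
  shows "x = y"
proof
  fix F show "x F = y F"
  proof (cases F)
    case empty
    then show ?thesis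
      using infinitesimal_character_empty[OF assms(1)] infinitesimal_character_empty[OF assms(2)] by simp
  next
    case (add t G)
    show ?thesis
    proof (cases "G = {#}")
      case True
      then show ?thesis using add assms(3) by simp
    next
      case False
      have F: "F = {#t#} + G" using add by simp
      have vanish: "z F = 0" if "infinitesimal_character_CK z" for z :: "tree multiset \<Rightarrow> 'k"
      proof -
        have "z ({#t#} + G) = z {#t#} * eps_CK G + eps_CK {#t#} * z G"
          using that unfolding infinitesimal_character_CK_def by blast
        then show ?thesis using False F by (simp add: eps_CK_def)
      qed
      show ?thesis using vanish[OF assms(1)] vanish[OF assms(2)] by simp
    qed
  qed
qed

lemma character_CK_eqI:
  assumes "character_CK x" "character_CK y" "\<forall>t. x {#t#} = y {#t#}"
  shows "x = y"
proof
  fix F show "x F = y F"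
  proof (induction F)
    case empty
    then show ?case using assms by (simp add: character_CK_def)
  next
    case (add t F)
    have "add_mset t F = {#t#} + F" by simp
    then show ?case using add assms unfolding character_CK_def by metis
  qed
qed

lemma bij_betw_characters_H:
  fixes f :: "(tree multiset \<Rightarrow> 'k::field) \<Rightarrow> tree multiset \<Rightarrow> 'k"
  assumes maps: "\<And>\<phi>. character_H \<phi> \<Longrightarrow> f \<phi> \<in> T"
    and trees: "\<And>\<phi> t. character_H \<phi> \<Longrightarrow> f \<phi> {#t#} = \<phi> (tree_H t)"
    and determined: "\<And>x y. x \<in> T \<Longrightarrow> y \<in> T \<Longrightarrow> \<forall>t. x {#t#} = y {#t#} \<Longrightarrow> x = y"
    and unit: "\<And>x. x \<in> T \<Longrightarrow> x {#bullet#} = 1"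
  shows "bij_betw f {\<phi>. character_H \<phi>} T"
proof (rule bij_betw_imageI)
  show "inj_on f {\<phi>. character_H \<phi>}"
  proof (rule inj_onI)
    fix p q assume "p \<in> {\<phi>. character_H \<phi>}" "q \<in> {\<phi>. character_H \<phi>}" "f p = f q"
    then show "p = q" using trees[of p] trees[of q] by (intro character_H_eqI) auto
  qed
  have "x \<in> f ` {\<phi>. character_H \<phi>}" if "x \<in> T" for x
  proof -
    have "f (character_H_of x) \<in> T"
      by (rule maps[OF character_H_of_character])
    moreover have "f (character_H_of x) {#t#} = x {#t#}" for t
      using trees[OF character_H_of_character] character_H_of_tree[of x, OF unit[OF that]] by simp
    ultimately have "f (character_H_of x) = x"
      using determined that by blast
    then show ?thesis
      using character_H_of_character[of x] by (intro image_eqI[where x = "character_H_of x"]) auto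
  qed
  then show "f ` {\<phi>. character_H \<phi>} = T" using maps by blast
qed

theorem mainTheorem8:
  shows
   "((\<forall>\<phi> :: tree multiset \<Rightarrow> 'k::field_char_0. character_H \<phi> \<longrightarrow>
        infinitesimal_character_CK (star \<phi> delta_bullet) \<and>
        (\<forall>t. star \<phi> delta_bullet {#t#} = \<phi> (tree_H t))) \<and>
     bij_betw (\<lambda>\<phi>. star \<phi> delta_bullet)
       {\<phi> :: tree multiset \<Rightarrow> 'k. character_H \<phi>}
       {\<beta>. infinitesimal_character_CK \<beta> \<and> \<beta> {#bullet#} = 1})
  \<and>
    ((\<forall>\<phi> :: tree multiset \<Rightarrow> 'k. character_H \<phi> \<longrightarrow>
        character_CK (star \<phi> delta_char) \<and>
        (\<forall>t. star \<phi> delta_char {#t#} = \<phi> (tree_H t))) \<and>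
     bij_betw (\<lambda>\<phi>. star \<phi> delta_char)
       {\<phi> :: tree multiset \<Rightarrow> 'k. character_H \<phi>}
       {b. character_CK b \<and> b {#bullet#} = 1})"
proof -
  have trees_bullet: "star \<phi> delta_bullet {#t#} = \<phi> (tree_H t)"
    and trees_char: "star \<phi> delta_char {#t#} = \<phi> (tree_H t)" for \<phi> :: "tree multiset \<Rightarrow> 'k" and t
    by (simp_all add: star_single delta_bullet_def delta_char_def)
  have unit: "\<phi> (tree_H bullet) = 1" if "character_H \<phi>" for \<phi> :: "tree multiset \<Rightarrow> 'k"
    using that by (simp add: tree_H_def character_H_def)
  have "bij_betw (\<lambda>\<phi>. star \<phi> delta_bullet) {\<phi> :: tree multiset \<Rightarrow> 'k. character_H \<phi>}
          {\<beta>. infinitesimal_character_CK \<beta> \<and> \<beta> {#bullet#} = 1}"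
    by (rule bij_betw_characters_H)
      (auto simp: trees_bullet unit star_delta_bullet_infinitesimal intro: infinitesimal_character_eqI)
  moreover have "bij_betw (\<lambda>\<phi>. star \<phi> delta_char) {\<phi> :: tree multiset \<Rightarrow> 'k. character_H \<phi>}
          {b. character_CK b \<and> b {#bullet#} = 1}"
    by (rule bij_betw_characters_H)
      (auto simp: trees_char unit star_delta_char_character intro: character_CK_eqI)
  ultimately show ?thesis
    using trees_bullet trees_char star_delta_bullet_infinitesimal star_delta_char_character by blast
qed

end
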